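(* For every $\Xi=(\xi_1,\dots,\xi_{n-1})\in\{0,1\}^{n-1}$, the set $B_\Xi$ is stable under all Kashiwara operators $\tilde e_i,\tilde f_i$ (i.e. if $b\in B_\Xi$ and $\tilde e_i b\neq 0$ then $\tilde e_i b\in B_\Xi$, and likewise for $\tilde f_i$) of the $\mathfrak{gl}_{2n}$-crystal $B^A(1)^{\otimes n}$ ($i=1,\dots,2n-1$), and also of the $\mathfrak{sp}_{2n}$-crystal $B^C(1)^{\otimes n}$ ($i=1,\dots,n$). Hence $B_\Xi$ is a union of connected components for both crystal structures.
   Context: Let $\mathcal{C}_n$ be the totally ordered alphabet $1<2<\cdots<n<\bar n<\overline{n-1}<\cdots<\bar1$. The crystal $B^A(1)$ of the vector representation of $U_q(\mathfrak{gl}_{2n})$ has vertex set $\mathcal{C}_n$ and arrows $1\xrightarrow{1}2\xrightarrow{2}\cdots\xrightarrow{n-1}n\xrightarrow{n}\bar n\xrightarrow{n+1}\overline{n-1}\xrightarrow{n+2}\cdots\xrightarrow{2n-1}\bar1$. The crystal $B^C(1)$ of the vector representation of $U_q(\mathfrak{sp}_{2n})$ has the same vertex set and arrows $k\xrightarrow{k}k+1$ and $\overline{k+1}\xrightarrow{k}\bar k$ for $1\le k\le n-1$, and $n\xrightarrow{n}\bar n$. Here $a\xrightarrow{i}b$ means $\tilde f_i a=b$, $\tilde e_i b=a$; $\varepsilon_i(b)$, $\varphi_i(b)$ are the number of times $\tilde e_i$, resp. $\tilde f_i$, can be applied to $b$. Tensor products use Kashiwara's convention: $\tilde f_i(b_1\otimes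 b_2)=\tilde f_ib_1\otimes b_2$ if $\varphi_i(b_1)>\varepsilon_i(b_2)$ and $b_1\otimes\tilde f_ib_2$ otherwise; $\tilde e_i(b_1\otimes b_2)=\tilde e_ib_1\otimes b_2$ if $\varphi_i(b_1)\ge\varepsilon_i(b_2)$ and $b_1\otimes\tilde e_ib_2$ otherwise; $n$-fold tensor powers are formed iteratively. Vertices of $B^A(1)^{\otimes n}$ and $B^C(1)^{\otimes n}$ are words $x_1\otimes\cdots\otimes x_n$ with $x_i\in\mathcal{C}_n$. For such a word define $\Xi(b)=(\xi_1,\dots,\xi_{n-1})$ with $\xi_i=0$ if $x_i<x_{i+1}$ and $\xi_i=1$ if $x_i\ge x_{i+1}$, and $B_\Xi=\{b:\Xi(b)=\Xi\}$. *)

theory Defs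
  imports Main
begin

text \<open>Letters of the alphabet C_n are encoded by their position in the total order
  1 < 2 < ... < n < bar n < ... < bar 1, i.e. by natural numbers 1..2n:
  the unbarred letter k is encoded as k, the barred letter bar k as 2n+1-k.\<close>

definition unb :: "nat \<Rightarrow> nat" where "unb k = k"
definition bar :: "nat \<Rightarrow> nat \<Rightarrow> nat" where "bar n k = 2 * n + 1 - k"

definition alphabet :: "nat \<Rightarrow> nat set" where "alphabet n = {1 .. 2 * n}"

text \<open>Kashiwara operators: (op i b = None) means op i b = 0.\<close>
type_synonym 'b kop = "nat \<Rightarrow> 'b \<Rightarrow> 'b option"

text \<open>Number of times an operator can be applied (epsilon for e, phi for f).\<close>
definition times_applicable :: "'b kop \<Rightarrow> nat \<Rightarrow> 'b \<Rightarrow> nat" where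
  "times_applicable op i b =
     (GREATEST m. ((\<lambda>ob. Option.bind ob (op i)) ^^ m) (Some b) \<noteq> None)"

text \<open>Kashiwara's tensor product convention.\<close>
definition tens_f :: "'a kop \<Rightarrow> 'a kop \<Rightarrow> 'b kop \<Rightarrow> 'b kop \<Rightarrow> ('a \<times> 'b) kop" where
  "tens_f e1 f1 e2 f2 i p = (case p of (b1, b2) \<Rightarrow>
     if times_applicable f1 i b1 > times_applicable e2 i b2
     then map_option (\<lambda>c. (c, b2)) (f1 i b1)
     else map_option (\<lambda>c. (b1, c)) (f2 i b2))"

definition tens_e :: "'a kop \<Rightarrow> 'a kop \<Rightarrow> 'b kop \<Rightarrow> 'b kop \<Rightarrow> ('a \<times> 'b) kop" where
  "tens_e e1 f1 e2 f2 i p = (case p of (b1, b2) \<Rightarrow>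
     if times_applicable f1 i b1 \<ge> times_applicable e2 i b2
     then map_option (\<lambda>c. (c, b2)) (e1 i b1)
     else map_option (\<lambda>c. (b1, c)) (e2 i b2))"

text \<open>Iterated tensor power: a word x_1 ... x_k (list) is (x_1 ... x_{k-1}) \<otimes> x_k.
  word_ops e f k gives (e, f) on words of length k; level 0 is the trivial crystal.\<close>
fun word_ops :: "nat kop \<Rightarrow> nat kop \<Rightarrow> nat \<Rightarrow> nat list kop \<times> nat list kop" where
  "word_ops e f 0 = (\<lambda>i w. None, \<lambda>i w. None)"
| "word_ops e f (Suc k) =
     (let E = fst (word_ops e f k); F = snd (word_ops e f k);
          join = (\<lambda>(u, x). u @ [x]) in
      (\<lambda>i w. map_option join (tens_e E F e f i (butlast w, last w)),
       \<lambda>i w. map_option join (tens_f E F e f i (butlast w, last w))))"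

definition fA :: "nat \<Rightarrow> nat kop" where
  "fA n i a = (if 1 \<le> i \<and> i < 2 * n \<and> a = i then Some (i + 1) else None)"
definition eA :: "nat \<Rightarrow> nat kop" where
  "eA n i a = (if 1 \<le> i \<and> i < 2 * n \<and> a = i + 1 then Some i else None)"

definition fC :: "nat \<Rightarrow> nat kop" where
  "fC n i a = (if 1 \<le> i \<and> i < n \<and> a = unb i then Some (unb (i + 1))
              else if 1 \<le> i \<and> i < n \<and> a = bar n (i + 1) then Some (bar n i)
              else if i = n \<and> a = unb n then Some (bar n n)
              else None)"
definition eC :: "nat \<Rightarrow> nat kop" where
  "eC n i a = (if 1 \<le> i \<and> i < n \<and> a = unb (i + 1) then Some (unb i)
              else if 1 \<le> i \<and> i < n \<and> a = bar n i then Some (bar n (i + 1))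
              else if i = n \<and> a = bar n n then Some (unb n)
              else None)"

definition eAw :: "nat \<Rightarrow> nat list kop" where "eAw n = fst (word_ops (eA n) (fA n) n)"
definition fAw :: "nat \<Rightarrow> nat list kop" where "fAw n = snd (word_ops (eA n) (fA n) n)"
definition eCw :: "nat \<Rightarrow> nat list kop" where "eCw n = fst (word_ops (eC n) (fC n) n)"
definition fCw :: "nat \<Rightarrow> nat list kop" where "fCw n = snd (word_ops (eC n) (fC n) n)"

definition words :: "nat \<Rightarrow> nat list set" where
  "words n = {w. length w = n \<and> set w \<subseteq> alphabet n}"

definition Xi :: "nat list \<Rightarrow> nat list" where
  "Xi w = map (\<lambda>i. if w ! i < w ! (i + 1) then 0 else 1) [0 ..< length w - 1]"

definition BXi :: "nat \<Rightarrow> nat list \<Rightarrow> nat list set" where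
  "BXi n \<Xi> = {b \<in> words n. Xi b = \<Xi>}"

definition crystal_edges :: "nat list set \<Rightarrow> nat set \<Rightarrow> nat list kop \<Rightarrow> nat list kop \<Rightarrow> (nat list \<times> nat list) set" where
  "crystal_edges V I E F = {(b, b'). b \<in> V \<and> b' \<in> V \<and> (\<exists>i\<in>I. E i b = Some b' \<or> F i b = Some b')}"

end

theory Submission
  imports Defs
begin

text \<open>With letters encoded by their positions, every \<open>i\<close>-string of \<open>B\<^sup>A(1)\<close> and of
  \<open>B\<^sup>C(1)\<close> is a single step \<open>a \<rightarrow> a + 1\<close>. Hence \<open>f\<^sub>i\<close> acts on a word by replacing one
  letter \<open>x\<close> with \<open>x + 1\<close>, and this changes the descent vector only if the preceding letter
  is \<open>x\<close> or the following letter is \<open>x + 1\<close>. The tensor product rule excludes both: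
  \<open>f\<^sub>i\<close> reaches \<open>x\<close> only if \<open>\<phi>\<^sub>i\<close> vanishes on the prefix before \<open>x\<close>, hence on its last
  letter, which therefore is not \<open>x\<close>; and then \<open>\<phi>\<^sub>i\<close> of the prefix ending in \<open>x\<close> is \<open>1\<close>, so
  \<open>f\<^sub>i\<close> stays on \<open>x\<close> past the next letter only if \<open>\<epsilon>\<^sub>i\<close> of that letter is \<open>0\<close>, whereas
  \<open>\<epsilon>\<^sub>i(x + 1) = 1\<close>. Since \<open>e\<^sub>i\<close> and \<open>f\<^sub>i\<close> are mutually inverse, the claim for \<open>e\<^sub>i\<close> follows.\<close>

definition seminormal ::
    "'b set \<Rightarrow> 'b kop \<Rightarrow> 'b kop \<Rightarrow> (nat \<Rightarrow> 'b \<Rightarrow> nat) \<Rightarrow> (nat \<Rightarrow> 'b \<Rightarrow> nat) \<Rightarrow> bool" where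
  "seminormal V E F \<phi> \<epsilon> \<longleftrightarrow> (\<forall>i. \<forall>b\<in>V.
     (F i b = None \<longleftrightarrow> \<phi> i b = 0) \<and> (E i b = None \<longleftrightarrow> \<epsilon> i b = 0) \<and>
     (\<forall>c. F i b = Some c \<longrightarrow> c \<in> V \<and> E i c = Some b \<and> \<phi> i c = \<phi> i b - 1) \<and>
     (\<forall>c. E i b = Some c \<longrightarrow> c \<in> V \<and> F i c = Some b \<and> \<epsilon> i c = \<epsilon> i b - 1))"

lemma seminormalI:
  assumes "\<And>i b. b \<in> V \<Longrightarrow> F i b = None \<longleftrightarrow> \<phi> i b = 0"
    and "\<And>i b. b \<in> V \<Longrightarrow> E i b = None \<longleftrightarrow> \<epsilon> i b = 0"
    and "\<And>i b c. b \<in> V \<Longrightarrow> F i b = Some c \<Longrightarrow> c \<in> V \<and> E i c = Some b \<and> \<phi> i c = \<phi> i b - 1"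
    and "\<And>i b c. b \<in> V \<Longrightarrow> E i b = Some c \<Longrightarrow> c \<in> V \<and> F i c = Some b \<and> \<epsilon> i c = \<epsilon> i b - 1"
  shows "seminormal V E F \<phi> \<epsilon>"
  using assms unfolding seminormal_def by blast

lemma seminormal_f_None_iff:
  "seminormal V E F \<phi> \<epsilon> \<Longrightarrow> b \<in> V \<Longrightarrow> F i b = None \<longleftrightarrow> \<phi> i b = 0"
  unfolding seminormal_def by blast

lemma seminormal_e_None_iff:
  "seminormal V E F \<phi> \<epsilon> \<Longrightarrow> b \<in> V \<Longrightarrow> E i b = None \<longleftrightarrow> \<epsilon> i b = 0"
  unfolding seminormal_def by blast

lemma seminormal_f_SomeD:
  "seminormal V E F \<phi> \<epsilon> \<Longrightarrow> b \<in> V \<Longrightarrow> F i b = Some c \<Longrightarrow>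
     c \<in> V \<and> E i c = Some b \<and> \<phi> i c = \<phi> i b - 1"
  unfolding seminormal_def by blast

lemma seminormal_e_SomeD:
  "seminormal V E F \<phi> \<epsilon> \<Longrightarrow> b \<in> V \<Longrightarrow> E i b = Some c \<Longrightarrow>
     c \<in> V \<and> F i c = Some b \<and> \<epsilon> i c = \<epsilon> i b - 1"
  unfolding seminormal_def by blast

lemma funpow_bind_None:
  fixes g :: "'a \<Rightarrow> 'a option"
  shows "((\<lambda>ob. Option.bind ob g) ^^ m) None = None"
  by (induction m) simp_all

lemma funpow_bind_Some_iff:
  fixes g :: "'a \<Rightarrow> 'a option"
  assumes "\<forall>b\<in>V. (g b = None \<longleftrightarrow> h b = 0) \<and> (\<forall>c. g b = Some c \<longrightarrow> c \<in> V \<and> h c = h b - 1)"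
    and "b \<in> V"
  shows "((\<lambda>ob. Option.bind ob g) ^^ m) (Some b) \<noteq> None \<longleftrightarrow> m \<le> h b"
  using assms(2)
proof (induction m arbitrary: b)
  case 0
  then show ?case by simp
next
  case (Suc m)
  have unfold: "((\<lambda>ob. Option.bind ob g) ^^ Suc m) (Some b) = ((\<lambda>ob. Option.bind ob g) ^^ m) (g b)"
    by (simp add: funpow_Suc_right del: funpow.simps)
  show ?case
  proof (cases "g b")
    case None
    then have "h b = 0" using assms(1) Suc.prems by blast
    with None show ?thesis unfolding unfold by (simp add: funpow_bind_None)
  next
    case (Some c)
    then have "c \<in> V" "h c = h b - 1" "h b \<noteq> 0" using assms(1) Suc.prems by auto
    then show ?thesis using Suc.IH[of c] Some unfolding unfold by auto
  qed
qed

lemma times_applicable_eqI: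
  assumes "\<forall>b\<in>V. (G i b = None \<longleftrightarrow> h b = 0) \<and> (\<forall>c. G i b = Some c \<longrightarrow> c \<in> V \<and> h c = h b - 1)"
    and "b \<in> V"
  shows "times_applicable G i b = h b"
  unfolding times_applicable_def
proof (rule Greatest_equality)
  show "((\<lambda>ob. Option.bind ob (G i)) ^^ h b) (Some b) \<noteq> None"
    using funpow_bind_Some_iff[OF assms, of "h b"] by simp
next
  fix m assume "((\<lambda>ob. Option.bind ob (G i)) ^^ m) (Some b) \<noteq> None"
  then show "m \<le> h b" using funpow_bind_Some_iff[OF assms, of m] by simp
qed

lemma seminormal_times_applicable_f:
  "seminormal V E F \<phi> \<epsilon> \<Longrightarrow> b \<in> V \<Longrightarrow> times_applicable F i b = \<phi> i b"
  unfolding seminormal_def by (rule times_applicable_eqI[where V = V]) blast+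

lemma seminormal_times_applicable_e:
  "seminormal V E F \<phi> \<epsilon> \<Longrightarrow> b \<in> V \<Longrightarrow> times_applicable E i b = \<epsilon> i b"
  unfolding seminormal_def by (rule times_applicable_eqI[where V = V]) blast+

lemma seminormal_transport:
  assumes C: "seminormal V E F \<phi> \<epsilon>"
    and g: "\<forall>v\<in>V. g v \<in> W \<and> h (g v) = v" and h: "\<forall>w\<in>W. h w \<in> V \<and> g (h w) = w"
  shows "seminormal W (\<lambda>i w. map_option g (E i (h w))) (\<lambda>i w. map_option g (F i (h w)))
           (\<lambda>i w. \<phi> i (h w)) (\<lambda>i w. \<epsilon> i (h w))"
proof (rule seminormalI)
  fix i w c assume "w \<in> W"
  with h have hw: "h w \<in> V" "g (h w) = w" by auto
  show "map_option g (F i (h w)) = None \<longleftrightarrow> \<phi> i (h w) = 0"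
    using seminormal_f_None_iff[OF C hw(1)] by simp
  show "map_option g (E i (h w)) = None \<longleftrightarrow> \<epsilon> i (h w) = 0"
    using seminormal_e_None_iff[OF C hw(1)] by simp
  show "c \<in> W \<and> map_option g (E i (h c)) = Some w \<and> \<phi> i (h c) = \<phi> i (h w) - 1"
    if "map_option g (F i (h w)) = Some c"
    using that seminormal_f_SomeD[OF C hw(1)] g hw by auto
  show "c \<in> W \<and> map_option g (F i (h c)) = Some w \<and> \<epsilon> i (h c) = \<epsilon> i (h w) - 1"
    if "map_option g (E i (h w)) = Some c"
    using that seminormal_e_SomeD[OF C hw(1)] g hw by auto
qed

text \<open>Truncated subtraction realises the \<open>max (0, -)\<close> in Kashiwara's formulas for \<open>\<phi>\<close> and
  \<open>\<epsilon>\<close> of a tensor product.\<close>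

definition tensor_phi ::
    "(nat \<Rightarrow> 'a \<Rightarrow> nat) \<Rightarrow> (nat \<Rightarrow> 'b \<Rightarrow> nat) \<Rightarrow> (nat \<Rightarrow> 'b \<Rightarrow> nat) \<Rightarrow> nat \<Rightarrow> 'a \<times> 'b \<Rightarrow> nat" where
  "tensor_phi \<phi>1 \<epsilon>2 \<phi>2 i p = (case p of (b1, b2) \<Rightarrow> \<phi>2 i b2 + (\<phi>1 i b1 - \<epsilon>2 i b2))"

definition tensor_eps ::
    "(nat \<Rightarrow> 'a \<Rightarrow> nat) \<Rightarrow> (nat \<Rightarrow> 'a \<Rightarrow> nat) \<Rightarrow> (nat \<Rightarrow> 'b \<Rightarrow> nat) \<Rightarrow> nat \<Rightarrow> 'a \<times> 'b \<Rightarrow> nat" where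
  "tensor_eps \<epsilon>1 \<phi>1 \<epsilon>2 i p = (case p of (b1, b2) \<Rightarrow> \<epsilon>1 i b1 + (\<epsilon>2 i b2 - \<phi>1 i b1))"

context
  fixes V1 E1 F1 \<phi>1 \<epsilon>1 V2 E2 F2 \<phi>2 \<epsilon>2
  assumes C1: "seminormal V1 E1 F1 \<phi>1 \<epsilon>1" and C2: "seminormal V2 E2 F2 \<phi>2 \<epsilon>2"
begin

lemma tens_f_seminormal:
  assumes "b1 \<in> V1" "b2 \<in> V2"
  shows "tens_f E1 F1 E2 F2 i (b1, b2) = (if \<epsilon>2 i b2 < \<phi>1 i b1
           then map_option (\<lambda>c. (c, b2)) (F1 i b1) else map_option (\<lambda>c. (b1, c)) (F2 i b2))"
  using seminormal_times_applicable_f[OF C1 assms(1)] seminormal_times_applicable_e[OF C2 assms(2)]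
  by (simp add: tens_f_def)

lemma tens_e_seminormal:
  assumes "b1 \<in> V1" "b2 \<in> V2"
  shows "tens_e E1 F1 E2 F2 i (b1, b2) = (if \<epsilon>2 i b2 \<le> \<phi>1 i b1
           then map_option (\<lambda>c. (c, b2)) (E1 i b1) else map_option (\<lambda>c. (b1, c)) (E2 i b2))"
  using seminormal_times_applicable_f[OF C1 assms(1)] seminormal_times_applicable_e[OF C2 assms(2)]
  by (simp add: tens_e_def)

lemma tens_f_SomeD:
  assumes b1: "b1 \<in> V1" and b2: "b2 \<in> V2" and F: "tens_f E1 F1 E2 F2 i (b1, b2) = Some c"
  shows "c \<in> V1 \<times> V2 \<and> tens_e E1 F1 E2 F2 i c = Some (b1, b2) \<and>
           tensor_phi \<phi>1 \<epsilon>2 \<phi>2 i c = tensor_phi \<phi>1 \<epsilon>2 \<phi>2 i (b1, b2) - 1"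
proof (cases "\<epsilon>2 i b2 < \<phi>1 i b1")
  case True
  with F obtain c1 where c1: "F1 i b1 = Some c1" "c = (c1, b2)"
    by (auto simp: tens_f_seminormal[OF b1 b2])
  with seminormal_f_SomeD[OF C1 b1] have "c1 \<in> V1" "E1 i c1 = Some b1" "\<phi>1 i c1 = \<phi>1 i b1 - 1"
    by auto
  moreover from this True have "\<epsilon>2 i b2 \<le> \<phi>1 i c1" by linarith
  ultimately show ?thesis using True c1(2) b2 by (simp add: tens_e_seminormal tensor_phi_def)
next
  case False
  with F obtain c2 where c2: "F2 i b2 = Some c2" "c = (b1, c2)"
    by (auto simp: tens_f_seminormal[OF b1 b2])
  with seminormal_f_SomeD[OF C2 b2]
  have c2V: "c2 \<in> V2" and "E2 i c2 = Some b2" "\<phi>2 i c2 = \<phi>2 i b2 - 1" by auto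
  moreover have "\<epsilon>2 i b2 = \<epsilon>2 i c2 - 1" "\<epsilon>2 i c2 \<noteq> 0"
    using seminormal_e_SomeD[OF C2 c2V] seminormal_e_None_iff[OF C2 c2V, of i]
      \<open>E2 i c2 = Some b2\<close> by auto
  moreover from calculation False have "\<not> \<epsilon>2 i c2 \<le> \<phi>1 i b1" by linarith
  ultimately show ?thesis using False c2(2) b1 by (simp add: tens_e_seminormal tensor_phi_def)
qed

lemma tens_e_SomeD:
  assumes b1: "b1 \<in> V1" and b2: "b2 \<in> V2" and E: "tens_e E1 F1 E2 F2 i (b1, b2) = Some c"
  shows "c \<in> V1 \<times> V2 \<and> tens_f E1 F1 E2 F2 i c = Some (b1, b2) \<and>
           tensor_eps \<epsilon>1 \<phi>1 \<epsilon>2 i c = tensor_eps \<epsilon>1 \<phi>1 \<epsilon>2 i (b1, b2) - 1"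
proof (cases "\<epsilon>2 i b2 \<le> \<phi>1 i b1")
  case True
  with E obtain c1 where c1: "E1 i b1 = Some c1" "c = (c1, b2)"
    by (auto simp: tens_e_seminormal[OF b1 b2])
  with seminormal_e_SomeD[OF C1 b1]
  have c1V: "c1 \<in> V1" and "F1 i c1 = Some b1" "\<epsilon>1 i c1 = \<epsilon>1 i b1 - 1" by auto
  moreover have "\<epsilon>1 i b1 \<noteq> 0" using seminormal_e_None_iff[OF C1 b1, of i] c1(1) by simp
  moreover have "\<phi>1 i b1 = \<phi>1 i c1 - 1" "\<phi>1 i c1 \<noteq> 0"
    using seminormal_f_SomeD[OF C1 c1V] seminormal_f_None_iff[OF C1 c1V, of i]
      \<open>F1 i c1 = Some b1\<close> by auto
  moreover from calculation True have "\<epsilon>2 i b2 < \<phi>1 i c1" by linarith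
  ultimately show ?thesis using True c1(2) b2 by (simp add: tens_f_seminormal tensor_eps_def)
next
  case False
  with E obtain c2 where c2: "E2 i b2 = Some c2" "c = (b1, c2)"
    by (auto simp: tens_e_seminormal[OF b1 b2])
  with seminormal_e_SomeD[OF C2 b2] have "c2 \<in> V2" "F2 i c2 = Some b2" "\<epsilon>2 i c2 = \<epsilon>2 i b2 - 1"
    by auto
  moreover from this False have "\<not> \<epsilon>2 i c2 < \<phi>1 i b1" by linarith
  ultimately show ?thesis using False c2(2) b1 by (simp add: tens_f_seminormal tensor_eps_def)
qed

lemma seminormal_tensor:
  "seminormal (V1 \<times> V2) (tens_e E1 F1 E2 F2) (tens_f E1 F1 E2 F2)
     (tensor_phi \<phi>1 \<epsilon>2 \<phi>2) (tensor_eps \<epsilon>1 \<phi>1 \<epsilon>2)"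
proof (rule seminormalI)
  fix i b c assume "b \<in> V1 \<times> V2"
  then obtain b1 b2 where b: "b = (b1, b2)" and b1: "b1 \<in> V1" and b2: "b2 \<in> V2" by blast
  show "tens_f E1 F1 E2 F2 i b = None \<longleftrightarrow> tensor_phi \<phi>1 \<epsilon>2 \<phi>2 i b = 0"
    using seminormal_f_None_iff[OF C1 b1, of i] seminormal_f_None_iff[OF C2 b2, of i]
    by (auto simp: b tens_f_seminormal[OF b1 b2] tensor_phi_def)
  show "tens_e E1 F1 E2 F2 i b = None \<longleftrightarrow> tensor_eps \<epsilon>1 \<phi>1 \<epsilon>2 i b = 0"
    using seminormal_e_None_iff[OF C1 b1, of i] seminormal_e_None_iff[OF C2 b2, of i]
    by (auto simp: b tens_e_seminormal[OF b1 b2] tensor_eps_def)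
  show "c \<in> V1 \<times> V2 \<and> tens_e E1 F1 E2 F2 i c = Some b \<and>
      tensor_phi \<phi>1 \<epsilon>2 \<phi>2 i c = tensor_phi \<phi>1 \<epsilon>2 \<phi>2 i b - 1"
    if "tens_f E1 F1 E2 F2 i b = Some c"
    using tens_f_SomeD[OF b1 b2] that by (simp add: b)
  show "c \<in> V1 \<times> V2 \<and> tens_f E1 F1 E2 F2 i c = Some b \<and>
      tensor_eps \<epsilon>1 \<phi>1 \<epsilon>2 i c = tensor_eps \<epsilon>1 \<phi>1 \<epsilon>2 i b - 1"
    if "tens_e E1 F1 E2 F2 i b = Some c"
    using tens_e_SomeD[OF b1 b2] that by (simp add: b)
qed

end

abbreviation word_e :: "nat kop \<Rightarrow> nat kop \<Rightarrow> nat \<Rightarrow> nat list kop" where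
  "word_e e f k \<equiv> fst (word_ops e f k)"

abbreviation word_f :: "nat kop \<Rightarrow> nat kop \<Rightarrow> nat \<Rightarrow> nat list kop" where
  "word_f e f k \<equiv> snd (word_ops e f k)"

lemma seminormal_word_ops_Suc:
  assumes "seminormal {w. length w = k} (word_e e f k) (word_f e f k) \<phi> \<epsilon>"
    and "seminormal UNIV e f \<phi>0 \<epsilon>0"
  shows "seminormal {w. length w = Suc k} (word_e e f (Suc k)) (word_f e f (Suc k))
           (\<lambda>i w. \<phi>0 i (last w) + (\<phi> i (butlast w) - \<epsilon>0 i (last w)))
           (\<lambda>i w. \<epsilon> i (butlast w) + (\<epsilon>0 i (last w) - \<phi> i (butlast w)))"
proof -
  have snoc: "\<forall>v\<in>{w. length w = k} \<times> UNIV. (case v of (u, x) \<Rightarrow> u @ [x]) \<in> {w. length w = Suc k} \<and>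
          (butlast (case v of (u, x) \<Rightarrow> u @ [x]), last (case v of (u, x) \<Rightarrow> u @ [x])) = v"
    by auto
  have split: "\<forall>w\<in>{w. length w = Suc k}. (butlast w, last w) \<in> {w. length w = k} \<times> UNIV \<and>
          (case (butlast w, last w) of (u, x) \<Rightarrow> u @ [x]) = w"
    by (auto intro!: append_butlast_last_id)
  show ?thesis
    using seminormal_transport[OF seminormal_tensor[OF assms] snoc split]
    by (simp add: Let_def tensor_phi_def tensor_eps_def)
qed

lemma seminormal_word_ops:
  assumes "seminormal UNIV e f \<phi>0 \<epsilon>0"
  shows "\<exists>\<phi> \<epsilon>. seminormal {w. length w = k} (word_e e f k) (word_f e f k) \<phi> \<epsilon>"
proof (induction k)
  case 0
  have "seminormal {w. length w = 0} (word_e e f 0) (word_f e f 0) (\<lambda>_ _. 0) (\<lambda>_ _. 0)"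
    by (rule seminormalI) simp_all
  then show ?case by blast
next
  case (Suc k)
  then show ?case using seminormal_word_ops_Suc[OF _ assms] by blast
qed

lemma word_f_snoc:
  "word_f e f (Suc k) i (u @ [x]) =
     (if times_applicable e i x < times_applicable (word_f e f k) i u
      then map_option (\<lambda>u'. u' @ [x]) (word_f e f k i u) else map_option (\<lambda>x'. u @ [x']) (f i x))"
  by (simp add: Let_def tens_f_def option.map_comp comp_def)

lemma word_e_snoc:
  "word_e e f (Suc k) i (u @ [x]) =
     (if times_applicable e i x \<le> times_applicable (word_f e f k) i u
      then map_option (\<lambda>u'. u' @ [x]) (word_e e f k i u) else map_option (\<lambda>x'. u @ [x']) (e i x))"
  by (simp add: Let_def tens_e_def option.map_comp comp_def)

text \<open>Otherwise the simplifier unfolds \<^const>\<open>word_ops\<close> before the two equations above can apply.\<close>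
declare word_ops.simps(2) [simp del]

lemma times_applicable_word_f_snoc:
  assumes "seminormal UNIV e f \<phi>0 \<epsilon>0" and "length u = k"
  shows "times_applicable (word_f e f (Suc k)) i (u @ [x]) =
           times_applicable f i x + (times_applicable (word_f e f k) i u - times_applicable e i x)"
proof -
  obtain \<phi> \<epsilon> where C: "seminormal {w. length w = k} (word_e e f k) (word_f e f k) \<phi> \<epsilon>"
    using seminormal_word_ops[OF assms(1)] by blast
  show ?thesis
    using seminormal_times_applicable_f[OF seminormal_word_ops_Suc[OF C assms(1)], of "u @ [x]"]
      seminormal_times_applicable_f[OF C, of u] seminormal_times_applicable_f[OF assms(1)]
      seminormal_times_applicable_e[OF assms(1)] assms(2)
    by simp
qed

lemma Xi_snoc: "u \<noteq> [] \<Longrightarrow> Xi (u @ [x]) = Xi u @ [if last u < x then 0 else 1]"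
proof -
  assume "u \<noteq> []"
  then obtain m where m: "length u = Suc m" by (cases u) auto
  then have "last u = u ! m" using \<open>u \<noteq> []\<close> by (simp add: last_conv_nth)
  with m show ?thesis unfolding Xi_def by (auto simp: nth_append)
qed

definition unit_step_crystal :: "nat kop \<Rightarrow> nat kop \<Rightarrow> bool" where
  "unit_step_crystal e f \<longleftrightarrow>
     (\<forall>i a b. f i a = Some b \<longleftrightarrow> e i b = Some a) \<and> (\<forall>i a b. f i a = Some b \<longrightarrow> b = Suc a) \<and>
     (\<forall>i a. f i a = None \<or> e i a = None)"

lemma unit_step_crystal_f_iff_e:
  "unit_step_crystal e f \<Longrightarrow> f i a = Some b \<longleftrightarrow> e i b = Some a"
  unfolding unit_step_crystal_def by simp

lemma unit_step_crystal_f_Suc: "unit_step_crystal e f \<Longrightarrow> f i a = Some b \<Longrightarrow> b = Suc a"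
  unfolding unit_step_crystal_def by simp

lemma unit_step_crystal_f_or_e_None: "unit_step_crystal e f \<Longrightarrow> f i a = None \<or> e i a = None"
  unfolding unit_step_crystal_def by simp

lemma unit_step_crystal_seminormal:
  assumes "unit_step_crystal e f"
  shows "seminormal UNIV e f
           (\<lambda>i a. if f i a = None then 0 else 1) (\<lambda>i a. if e i a = None then 0 else 1)"
proof -
  note inv = unit_step_crystal_f_iff_e[OF assms] and disj = unit_step_crystal_f_or_e_None[OF assms]
  show ?thesis
  proof (rule seminormalI)
    fix i b c
    show "f i b = None \<longleftrightarrow> (if f i b = None then 0 else 1) = (0::nat)" by simp
    show "e i b = None \<longleftrightarrow> (if e i b = None then 0 else 1) = (0::nat)" by simp
    show "c \<in> UNIV \<and> e i c = Some b \<and>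
        (if f i c = None then 0 else 1) = (if f i b = None then 0 else 1) - (1::nat)"
      if "f i b = Some c"
      using that inv[of i b c] disj[of i c] by auto
    show "c \<in> UNIV \<and> f i c = Some b \<and>
        (if e i c = None then 0 else 1) = (if e i b = None then 0 else 1) - (1::nat)"
      if "e i b = Some c"
      using that inv[of i c b] disj[of i c] by auto
  qed
qed

lemma unit_step_crystal_times_applicable_f:
  "unit_step_crystal e f \<Longrightarrow> times_applicable f i a = (if f i a = None then 0 else 1)"
  using seminormal_times_applicable_f[OF unit_step_crystal_seminormal] by simp

lemma unit_step_crystal_times_applicable_e:
  "unit_step_crystal e f \<Longrightarrow> times_applicable e i a = (if e i a = None then 0 else 1)"
  using seminormal_times_applicable_e[OF unit_step_crystal_seminormal] by simp

lemma word_f_changes_last: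
  assumes U: "unit_step_crystal e f" and u: "length u = Suc k"
    and F: "word_f e f (Suc k) i u = Some u'"
  shows "last u' = last u \<or>
           f i (last u) = Some (last u') \<and> times_applicable (word_f e f (Suc k)) i u = 1"
proof -
  obtain v y where uv: "u = v @ [y]" and v: "length v = k"
    using u by (cases u rule: rev_cases) auto
  show ?thesis
  proof (cases "times_applicable e i y < times_applicable (word_f e f k) i v")
    case True
    with F show ?thesis by (auto simp: uv word_f_snoc)
  next
    case False
    with F obtain y' where y': "f i y = Some y'" "u' = v @ [y']" by (auto simp: uv word_f_snoc)
    with unit_step_crystal_f_or_e_None[OF U, of i y] have "e i y = None" by simp
    with False U have "times_applicable (word_f e f k) i v = 0"
      by (simp add: unit_step_crystal_times_applicable_e)
    with y' U v show ?thesis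
      by (simp add: uv times_applicable_word_f_snoc[OF unit_step_crystal_seminormal]
          unit_step_crystal_times_applicable_f unit_step_crystal_times_applicable_e)
  qed
qed

lemma times_applicable_word_f_last:
  assumes U: "unit_step_crystal e f" and u: "length u = Suc k" and "f i (last u) \<noteq> None"
  shows "times_applicable (word_f e f (Suc k)) i u \<noteq> 0"
proof -
  obtain v y where uv: "u = v @ [y]" and v: "length v = k"
    using u by (cases u rule: rev_cases) auto
  with assms show ?thesis
    by (auto simp: times_applicable_word_f_snoc[OF unit_step_crystal_seminormal]
        unit_step_crystal_times_applicable_f)
qed

lemma last_less_word_f_prefix:
  assumes U: "unit_step_crystal e f" and u: "length u = Suc k"
    and F: "word_f e f (Suc k) i u = Some u'"
    and acts_on_prefix: "times_applicable e i x < times_applicable (word_f e f (Suc k)) i u"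
  shows "last u' < x \<longleftrightarrow> last u < x"
proof (cases "last u' = last u")
  case False
  with word_f_changes_last[OF U u F] acts_on_prefix
  have f_last: "f i (last u) = Some (last u')" and "times_applicable e i x = 0" by auto
  with U have "e i x = None" by (simp add: unit_step_crystal_times_applicable_e split: if_splits)
  moreover have "e i (last u') = Some (last u)"
    using unit_step_crystal_f_iff_e[OF U] f_last by blast
  ultimately have "x \<noteq> last u'" by auto
  moreover have "last u' = Suc (last u)" using unit_step_crystal_f_Suc[OF U f_last] .
  ultimately show ?thesis by auto
qed simp

lemma last_less_word_f_letter:
  assumes U: "unit_step_crystal e f" and u: "length u = Suc k" and x': "f i x = Some x'"
    and acts_on_letter: "\<not> times_applicable e i x < times_applicable (word_f e f (Suc k)) i u"
  shows "last u < x' \<longleftrightarrow> last u < x"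
proof -
  from x' have "e i x = None" using unit_step_crystal_f_or_e_None[OF U, of i x] by simp
  with acts_on_letter U have "times_applicable (word_f e f (Suc k)) i u = 0"
    by (simp add: unit_step_crystal_times_applicable_e)
  with times_applicable_word_f_last[OF U u, of i] have "f i (last u) = None" by fastforce
  with x' have "last u \<noteq> x" by auto
  moreover have "x' = Suc x" using unit_step_crystal_f_Suc[OF U x'] .
  ultimately show ?thesis by auto
qed

lemma Xi_word_f:
  assumes U: "unit_step_crystal e f"
  shows "length w = k \<Longrightarrow> word_f e f k i w = Some w' \<Longrightarrow> Xi w' = Xi w"
proof (induction k arbitrary: w w')
  case 0
  then show ?case by simp
next
  case (Suc k)
  obtain u x where w: "w = u @ [x]" and u: "length u = k"
    using Suc.prems(1) by (cases w rule: rev_cases) auto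
  show ?case
  proof (cases "times_applicable e i x < times_applicable (word_f e f k) i u")
    case True
    with Suc.prems(2) obtain u' where u': "word_f e f k i u = Some u'" and w': "w' = u' @ [x]"
      by (auto simp: w word_f_snoc)
    then obtain k' where k: "k = Suc k'" using u by (cases k) auto
    obtain \<phi> \<epsilon> where C: "seminormal {w. length w = k} (word_e e f k) (word_f e f k) \<phi> \<epsilon>"
      using seminormal_word_ops[OF unit_step_crystal_seminormal[OF U]] by blast
    have "length u' = k" using seminormal_f_SomeD[OF C _ u'] u by simp
    with u k have "u \<noteq> []" "u' \<noteq> []" by auto
    moreover have "last u' < x \<longleftrightarrow> last u < x"
      using last_less_word_f_prefix[OF U u[unfolded k] u'[unfolded k]] True k by simp
    ultimately show ?thesis using Suc.IH[OF u u'] by (simp add: w w' Xi_snoc)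
  next
    case False
    with Suc.prems(2) obtain x' where x': "f i x = Some x'" and w': "w' = u @ [x']"
      by (auto simp: w word_f_snoc)
    show ?thesis
    proof (cases k)
      case 0
      with u show ?thesis by (simp add: w w' Xi_def)
    next
      case (Suc k')
      with u have "u \<noteq> []" by auto
      moreover have "last u < x' \<longleftrightarrow> last u < x"
        using last_less_word_f_letter[OF U u[unfolded Suc] x'] False Suc by simp
      ultimately show ?thesis by (simp add: w w' Xi_snoc)
    qed
  qed
qed

lemma set_word_ops_subset:
  assumes A: "\<And>i a b. e i a = Some b \<or> f i a = Some b \<Longrightarrow> b \<in> A"
  shows "length w = k \<Longrightarrow> set w \<subseteq> A \<Longrightarrow> word_e e f k i w = Some w' \<or> word_f e f k i w = Some w'
           \<Longrightarrow> set w' \<subseteq> A"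
proof (induction k arbitrary: w w')
  case 0
  then show ?case by simp
next
  case (Suc k)
  obtain u x where w: "w = u @ [x]" and u: "length u = k"
    using Suc.prems(1) by (cases w rule: rev_cases) auto
  from Suc.prems(3) consider
      (prefix) u' where "word_e e f k i u = Some u' \<or> word_f e f k i u = Some u'" "w' = u' @ [x]"
    | (letter) x' where "e i x = Some x' \<or> f i x = Some x'" "w' = u @ [x']"
    by (auto simp: w word_e_snoc word_f_snoc split: if_splits)
  then show ?case
  proof cases
    case prefix
    then show ?thesis using Suc.IH[OF u] Suc.prems(2) by (auto simp: w)
  next
    case letter
    then show ?thesis using A Suc.prems(2) by (auto simp: w)
  qed
qed

lemma word_ops_preserve_BXi:
  assumes U: "unit_step_crystal e f"
    and A: "\<And>i a b. e i a = Some b \<or> f i a = Some b \<Longrightarrow> b \<in> alphabet n"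
    and b: "b \<in> BXi n \<Xi>" and op: "word_e e f n i b = Some b' \<or> word_f e f n i b = Some b'"
  shows "b' \<in> BXi n \<Xi>"
proof -
  obtain \<phi> \<epsilon> where C: "seminormal {w. length w = n} (word_e e f n) (word_f e f n) \<phi> \<epsilon>"
    using seminormal_word_ops[OF unit_step_crystal_seminormal[OF U]] by blast
  from b have len: "length b = n" and set: "set b \<subseteq> alphabet n" and "Xi b = \<Xi>"
    by (auto simp: BXi_def words_def)
  from op have "length b' = n \<and> Xi b' = Xi b"
  proof
    assume E: "word_e e f n i b = Some b'"
    with seminormal_e_SomeD[OF C _ E] len have "length b' = n" "word_f e f n i b' = Some b" by auto
    then show ?thesis using Xi_word_f[OF U] by simp
  next
    assume F: "word_f e f n i b = Some b'"
    with seminormal_f_SomeD[OF C _ F] len show ?thesis using Xi_word_f[OF U len F] by auto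
  qed
  moreover have "set b' \<subseteq> alphabet n" using set_word_ops_subset[OF A len set op] .
  ultimately show ?thesis using \<open>Xi b = \<Xi>\<close> by (simp add: BXi_def words_def)
qed

lemma rtrancl_crystal_edges_closed:
  assumes closed: "\<And>i b b'. i \<in> I \<Longrightarrow> b \<in> S \<Longrightarrow> E i b = Some b' \<or> F i b = Some b' \<Longrightarrow> b' \<in> S"
    and "(b, b') \<in> (crystal_edges V I E F)\<^sup>*" and "b \<in> S"
  shows "b' \<in> S"
  using assms(2,3) by induction (auto simp: crystal_edges_def intro: closed)

lemma unit_step_crystal_A: "unit_step_crystal (eA n) (fA n)"
  unfolding unit_step_crystal_def eA_def fA_def by auto

lemma unit_step_crystal_C: "unit_step_crystal (eC n) (fC n)"
  unfolding unit_step_crystal_def eC_def fC_def unb_def bar_def by auto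

lemma alphabet_closed_A: "eA n i a = Some b \<or> fA n i a = Some b \<Longrightarrow> b \<in> alphabet n"
  unfolding eA_def fA_def alphabet_def by (auto split: if_splits)

lemma alphabet_closed_C: "n \<ge> 1 \<Longrightarrow> eC n i a = Some b \<or> fC n i a = Some b \<Longrightarrow> b \<in> alphabet n"
  unfolding eC_def fC_def unb_def bar_def alphabet_def by (auto split: if_splits)

theorem mainTheorem8:
  fixes n :: nat and \<Xi> :: "nat list"
  assumes "n \<ge> 1" and "length \<Xi> = n - 1" and "set \<Xi> \<subseteq> {0, 1}"
  shows "(\<forall>i \<in> {1 .. 2 * n - 1}. \<forall>b \<in> BXi n \<Xi>. \<forall>b'.
            (eAw n i b = Some b' \<longrightarrow> b' \<in> BXi n \<Xi>) \<and> (fAw n i b = Some b' \<longrightarrow> b' \<in> BXi n \<Xi>))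
       \<and> (\<forall>i \<in> {1 .. n}. \<forall>b \<in> BXi n \<Xi>. \<forall>b'.
            (eCw n i b = Some b' \<longrightarrow> b' \<in> BXi n \<Xi>) \<and> (fCw n i b = Some b' \<longrightarrow> b' \<in> BXi n \<Xi>))
       \<and> (\<forall>b \<in> BXi n \<Xi>. \<forall>b'.
            (b, b') \<in> (crystal_edges (words n) {1 .. 2 * n - 1} (eAw n) (fAw n))\<^sup>* \<longrightarrow> b' \<in> BXi n \<Xi>)
       \<and> (\<forall>b \<in> BXi n \<Xi>. \<forall>b'.
            (b, b') \<in> (crystal_edges (words n) {1 .. n} (eCw n) (fCw n))\<^sup>* \<longrightarrow> b' \<in> BXi n \<Xi>)"
proof -
  have A: "b' \<in> BXi n \<Xi>" if "b \<in> BXi n \<Xi>" "eAw n i b = Some b' \<or> fAw n i b = Some b'" for i b b'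
    using word_ops_preserve_BXi[OF unit_step_crystal_A alphabet_closed_A that(1)] that(2)
    by (simp add: eAw_def fAw_def)
  have C: "b' \<in> BXi n \<Xi>" if "b \<in> BXi n \<Xi>" "eCw n i b = Some b' \<or> fCw n i b = Some b'" for i b b'
    using word_ops_preserve_BXi[OF unit_step_crystal_C alphabet_closed_C[OF assms(1)] that(1)]
      that(2)
    by (simp add: eCw_def fCw_def)
  have A_components: "b' \<in> BXi n \<Xi>"
    if "(b, b') \<in> (crystal_edges (words n) I (eAw n) (fAw n))\<^sup>*" "b \<in> BXi n \<Xi>" for I b b'
    by (rule rtrancl_crystal_edges_closed[OF _ that]) (blast intro: A)
  have C_components: "b' \<in> BXi n \<Xi>"
    if "(b, b') \<in> (crystal_edges (words n) I (eCw n) (fCw n))\<^sup>*" "b \<in> BXi n \<Xi>" for I b b'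
    by (rule rtrancl_crystal_edges_closed[OF _ that]) (blast intro: C)
  show ?thesis
    using A C A_components C_components by (intro conjI ballI allI impI) blast+
qed

end
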